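(* Let $a>0$, $b>0$, $c>0$ and consider the equation $u_t+ax^2u_{xx}+bx^3u_{xx}^2+cxu_x-cu=0$ for $t>0$, $x>0$. Let $c_1,c_2$ be arbitrary real constants and $\varepsilon,\delta\in\{1,-1\}$. Each of the following functions is an exact solution: (1) $u=c_1e^{ct}+\frac{a}{2b}x\left(c_2+\frac{a+2c}{2}t-\log x\right)$; (2) $u=(c_1-ct)e^{ct}+4\delta e^{\frac c2t}\sqrt{\frac{cx}{b}}+\frac{a}{2b}x\left(c_2+\frac{a+2c}{2}t-\log x\right)$; (3) $u=c_1e^{ct}+\frac{a+2\varepsilon c}{2b}x\left(c_2+\frac{a+2(1-\varepsilon)c}{2}t-\log x\right)$; (4) $u=\varepsilon c_1^2e^{(1-\varepsilon)ct}+4\delta c_1e^{\frac c2(1-\varepsilon)t}\sqrt{\frac{cx}{b}}+\frac{a+2\varepsilon c}{2b}x\left(c_2+\frac{a+2(1-\varepsilon)c}{2}t-\log x\right)$; (5) $u=\frac{cx}{b}\left\{c_1+\left[\varepsilon c+\frac a2\left(1+\frac{a}{2c}\right)\right]t-\frac{a}{2c}\log x+\frac{1}{2k}\left(\delta\sqrt{1-4\varepsilon k^2}-1\right)\left[\left(\frac1k-1\right)ct+\log x\right]\right\}$, where $k\neq0$ if $\varepsilon=-1$, and $0<|k|\le\frac12$ if $\varepsilon=1$.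
   Context: $\log$ denotes the natural logarithm. *)

theory Defs
  imports Complex_Main
begin

definition solves_eq :: "real \<Rightarrow> real \<Rightarrow> real \<Rightarrow> (real \<Rightarrow> real \<Rightarrow> real) \<Rightarrow> bool" where
  "solves_eq a b c u \<longleftrightarrow>
     (\<exists>ut ux uxx. \<forall>t>0. \<forall>x>0.
        ((\<lambda>s. u s x) has_real_derivative ut t x) (at t) \<and>
        ((\<lambda>y. u t y) has_real_derivative ux t x) (at x) \<and>
        ((\<lambda>y. ux t y) has_real_derivative uxx t x) (at x) \<and>
        ut t x + a * x^2 * uxx t x + b * x^3 * (uxx t x)^2 + c * x * ux t x - c * u t x = 0)"

end

theory Submission
  imports Defs
begin

text \<open>All five families are instances of the ansatz
  \<open>u = F(t) + G(t) \<surd>x + x (K(t) - A log x)\<close>. On it each term of the equation is again a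
  combination of \<open>1\<close>, \<open>\<surd>x\<close>, \<open>x\<close> and \<open>x log x\<close> (the nonlinearity \<open>x\<^sup>3 u\<^sub>x\<^sub>x\<^sup>2\<close> included,
  since \<open>u\<^sub>x\<^sub>x = - G / (4 x \<surd>x) - A / x\<close>), so the equation splits into the ODE system
  \<open>F' = c F - b G\<^sup>2/16\<close>, \<open>G' = (a/4 + c/2 - b A/2) G\<close>, \<open>K' = A (a + c - b A)\<close>,
  which is solved explicitly in each case. In the last family \<open>A = a/(2b) - c m/b\<close>, and the
  equation for \<open>K\<close> forces \<open>m\<^sup>2 + m/k + \<epsilon> = 0\<close>.\<close>

lemma sqrt_has_real_derivative:
  assumes "0 < x"
  shows "(sqrt has_real_derivative sqrt x / (2 * x)) (at x)"
proof -
  have "inverse (sqrt x) / 2 = sqrt x / (2 * x)"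
    using assms by (simp add: field_simps flip: real_sqrt_mult)
  with DERIV_real_sqrt[OF assms] show ?thesis by simp
qed

lemma sqrt_div_has_real_derivative:
  assumes "0 < x"
  shows "((\<lambda>y. sqrt y / (2 * y)) has_real_derivative - sqrt x / (4 * x^2)) (at x)"
  using assms by (auto intro!: derivative_eq_intros sqrt_has_real_derivative simp: field_simps power2_eq_square)

lemma solves_eq_ansatz:
  fixes F G K :: "real \<Rightarrow> real"
  assumes u: "\<And>t x. u t x = F t + G t * sqrt x + x * (K t - A * ln x)"
    and F: "\<And>t. (F has_real_derivative c * F t - b * G t ^ 2 / 16) (at t)"
    and G: "\<And>t. (G has_real_derivative (a / 4 + c / 2 - b * A / 2) * G t) (at t)"
    and K: "\<And>t. (K has_real_derivative A * (a + c - b * A)) (at t)"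
  shows "solves_eq a b c u"
  unfolding solves_eq_def
proof (intro exI allI impI conjI)
  fix t x :: real
  assume "0 < t" and x: "0 < x"
  show "((\<lambda>s. u s x) has_real_derivative
      (c * F t - b * G t ^ 2 / 16) + (a / 4 + c / 2 - b * A / 2) * G t * sqrt x + x * (A * (a + c - b * A))) (at t)"
    unfolding u by (auto intro!: derivative_eq_intros F G K)
  show "((\<lambda>y. u t y) has_real_derivative G t * (sqrt x / (2 * x)) + (K t - A * ln x - A)) (at x)"
    unfolding u using x by (auto intro!: derivative_eq_intros sqrt_has_real_derivative simp: field_simps)
  show "((\<lambda>y. G t * (sqrt y / (2 * y)) + (K t - A * ln y - A)) has_real_derivative
      G t * (- sqrt x / (4 * x^2)) + - A / x) (at x)"
    using x by (intro DERIV_add DERIV_cmult sqrt_div_has_real_derivative)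
      (auto intro!: derivative_eq_intros simp: field_simps)
  txt \<open>With \<open>x = r\<^sup>2\<close> the identity becomes rational in \<open>r\<close>.\<close>
  define r where "r = sqrt x"
  have r: "0 < r" "x = r^2"
    using x by (simp_all add: r_def)
  show "(c * F t - b * G t ^ 2 / 16) + (a / 4 + c / 2 - b * A / 2) * G t * sqrt x + x * (A * (a + c - b * A))
      + a * x^2 * (G t * (- sqrt x / (4 * x^2)) + - A / x)
      + b * x^3 * (G t * (- sqrt x / (4 * x^2)) + - A / x)^2
      + c * x * (G t * (sqrt x / (2 * x)) + (K t - A * ln x - A)) - c * u t x = 0"
    unfolding u r_def[symmetric] using r by (simp add: field_simps power2_eq_square power3_eq_cube)
qed

lemma solves_eq_exp_log:
  assumes "b \<noteq> 0"
  shows "solves_eq a b c (\<lambda>t x. c1 * exp (c * t)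
    + (a + 2 * e * c) / (2 * b) * x * (c2 + (a + 2 * (1 - e) * c) / 2 * t - ln x))"
  by (rule solves_eq_ansatz[where F = "\<lambda>t. c1 * exp (c * t)" and G = "\<lambda>t. 0"
        and A = "(a + 2 * e * c) / (2 * b)"
        and K = "\<lambda>t. (a + 2 * e * c) / (2 * b) * (c2 + (a + 2 * (1 - e) * c) / 2 * t)"])
    (use assms in \<open>auto intro!: derivative_eq_intros simp: field_simps\<close>)

text \<open>Here \<open>G\<^sup>2\<close> grows like \<open>exp (c t)\<close>, in resonance with \<open>F' = c F\<close>; hence the secular
  factor \<open>c1 - c t\<close>.\<close>

lemma solves_eq_resonant:
  assumes "0 < b" "0 \<le> c" "\<delta>^2 = 1"
  shows "solves_eq a b c (\<lambda>t x. (c1 - c * t) * exp (c * t) + 4 * \<delta> * exp (c / 2 * t) * sqrt (c * x / b)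
    + a / (2 * b) * x * (c2 + (a + 2 * c) / 2 * t - ln x))"
proof (rule solves_eq_ansatz[where F = "\<lambda>t. (c1 - c * t) * exp (c * t)"
      and G = "\<lambda>t. 4 * \<delta> * sqrt (c / b) * exp (c * t / 2)"
      and A = "a / (2 * b)" and K = "\<lambda>t. a / (2 * b) * (c2 + (a + 2 * c) / 2 * t)"])
  fix t x :: real
  have "sqrt (c * x / b) = sqrt (c / b) * sqrt x"
    by (simp flip: real_sqrt_mult)
  then show "(c1 - c * t) * exp (c * t) + 4 * \<delta> * exp (c / 2 * t) * sqrt (c * x / b)
      + a / (2 * b) * x * (c2 + (a + 2 * c) / 2 * t - ln x)
    = (c1 - c * t) * exp (c * t) + 4 * \<delta> * sqrt (c / b) * exp (c * t / 2) * sqrt x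
      + x * (a / (2 * b) * (c2 + (a + 2 * c) / 2 * t) - a / (2 * b) * ln x)"
    by (simp add: algebra_simps)
  have "b * (4 * \<delta> * sqrt (c / b) * exp (c * t / 2))^2 / 16 = c * exp (c * t)"
    using assms by (simp add: power_mult_distrib flip: exp_double)
  then show "((\<lambda>t. (c1 - c * t) * exp (c * t)) has_real_derivative
      c * ((c1 - c * t) * exp (c * t)) - b * (4 * \<delta> * sqrt (c / b) * exp (c * t / 2))^2 / 16) (at t)"
    by (auto intro!: derivative_eq_intros simp: algebra_simps)
  show "((\<lambda>t. 4 * \<delta> * sqrt (c / b) * exp (c * t / 2)) has_real_derivative
      (a / 4 + c / 2 - b * (a / (2 * b)) / 2) * (4 * \<delta> * sqrt (c / b) * exp (c * t / 2))) (at t)"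
    using assms by (auto intro!: derivative_eq_intros simp: field_simps)
  show "((\<lambda>t. a / (2 * b) * (c2 + (a + 2 * c) / 2 * t)) has_real_derivative
      a / (2 * b) * (a + c - b * (a / (2 * b)))) (at t)"
    using assms by (auto intro!: derivative_eq_intros simp: field_simps)
qed

lemma solves_eq_exp_sqrt_log:
  assumes "0 < b" "0 \<le> c" "\<epsilon>^2 = 1" "\<delta>^2 = 1"
  shows "solves_eq a b c (\<lambda>t x. \<epsilon> * c1^2 * exp ((1 - \<epsilon>) * c * t)
    + 4 * \<delta> * c1 * exp (c / 2 * (1 - \<epsilon>) * t) * sqrt (c * x / b)
    + (a + 2 * \<epsilon> * c) / (2 * b) * x * (c2 + (a + 2 * (1 - \<epsilon>) * c) / 2 * t - ln x))"
proof (rule solves_eq_ansatz[where F = "\<lambda>t. \<epsilon> * c1^2 * exp ((1 - \<epsilon>) * c * t)"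
      and G = "\<lambda>t. 4 * \<delta> * c1 * sqrt (c / b) * exp ((1 - \<epsilon>) * c * t / 2)"
      and A = "(a + 2 * \<epsilon> * c) / (2 * b)"
      and K = "\<lambda>t. (a + 2 * \<epsilon> * c) / (2 * b) * (c2 + (a + 2 * (1 - \<epsilon>) * c) / 2 * t)"])
  fix t x :: real
  have "sqrt (c * x / b) = sqrt (c / b) * sqrt x"
    by (simp flip: real_sqrt_mult)
  then show "\<epsilon> * c1^2 * exp ((1 - \<epsilon>) * c * t)
      + 4 * \<delta> * c1 * exp (c / 2 * (1 - \<epsilon>) * t) * sqrt (c * x / b)
      + (a + 2 * \<epsilon> * c) / (2 * b) * x * (c2 + (a + 2 * (1 - \<epsilon>) * c) / 2 * t - ln x)
    = \<epsilon> * c1^2 * exp ((1 - \<epsilon>) * c * t) + 4 * \<delta> * c1 * sqrt (c / b) * exp ((1 - \<epsilon>) * c * t / 2) * sqrt x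
      + x * ((a + 2 * \<epsilon> * c) / (2 * b) * (c2 + (a + 2 * (1 - \<epsilon>) * c) / 2 * t)
        - (a + 2 * \<epsilon> * c) / (2 * b) * ln x)"
    by (simp add: algebra_simps)
  have "b * (4 * \<delta> * c1 * sqrt (c / b) * exp ((1 - \<epsilon>) * c * t / 2))^2 / 16
      = c * c1^2 * exp ((1 - \<epsilon>) * c * t)"
    using assms by (simp add: power_mult_distrib flip: exp_double)
  moreover have "\<epsilon> * (1 - \<epsilon>) = \<epsilon> - 1"
    using assms(3) by (simp add: algebra_simps power2_eq_square)
  ultimately show "((\<lambda>t. \<epsilon> * c1^2 * exp ((1 - \<epsilon>) * c * t)) has_real_derivative
      c * (\<epsilon> * c1^2 * exp ((1 - \<epsilon>) * c * t))
      - b * (4 * \<delta> * c1 * sqrt (c / b) * exp ((1 - \<epsilon>) * c * t / 2))^2 / 16) (at t)"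
    by (auto intro!: derivative_eq_intros simp: algebra_simps)
  show "((\<lambda>t. 4 * \<delta> * c1 * sqrt (c / b) * exp ((1 - \<epsilon>) * c * t / 2)) has_real_derivative
      (a / 4 + c / 2 - b * ((a + 2 * \<epsilon> * c) / (2 * b)) / 2)
      * (4 * \<delta> * c1 * sqrt (c / b) * exp ((1 - \<epsilon>) * c * t / 2))) (at t)"
    using assms by (auto intro!: derivative_eq_intros simp: field_simps)
  show "((\<lambda>t. (a + 2 * \<epsilon> * c) / (2 * b) * (c2 + (a + 2 * (1 - \<epsilon>) * c) / 2 * t)) has_real_derivative
      (a + 2 * \<epsilon> * c) / (2 * b) * (a + c - b * ((a + 2 * \<epsilon> * c) / (2 * b)))) (at t)"
    using assms by (auto intro!: derivative_eq_intros simp: field_simps)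
qed

lemma solves_eq_log_linear:
  assumes "b \<noteq> 0" "c \<noteq> 0" "k \<noteq> 0" "m^2 + m / k + \<epsilon> = 0"
  shows "solves_eq a b c (\<lambda>t x. c * x / b *
    (c1 + (\<epsilon> * c + a / 2 * (1 + a / (2 * c))) * t - a / (2 * c) * ln x
     + m * ((1 / k - 1) * c * t + ln x)))"
proof (rule solves_eq_ansatz[where F = "\<lambda>t. 0" and G = "\<lambda>t. 0" and A = "a / (2 * b) - c * m / b"
      and K = "\<lambda>t. c / b * (c1 + (\<epsilon> * c + a / 2 * (1 + a / (2 * c)) + m * (1 / k - 1) * c) * t)"])
  fix t x :: real
  show "c * x / b * (c1 + (\<epsilon> * c + a / 2 * (1 + a / (2 * c))) * t - a / (2 * c) * ln x
      + m * ((1 / k - 1) * c * t + ln x))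
    = 0 + 0 * sqrt x + x * (c / b * (c1 + (\<epsilon> * c + a / 2 * (1 + a / (2 * c)) + m * (1 / k - 1) * c) * t)
      - (a / (2 * b) - c * m / b) * ln x)"
    using assms by (simp add: field_simps)
  have "c / b * (\<epsilon> * c + a / 2 * (1 + a / (2 * c)) + m * (1 / k - 1) * c)
      - (a / (2 * b) - c * m / b) * (a + c - b * (a / (2 * b) - c * m / b))
    = c^2 / b * (m^2 + m / k + \<epsilon>)"
    using assms(1-3) by (simp add: field_simps power2_eq_square)
  with assms(4) have "c / b * (\<epsilon> * c + a / 2 * (1 + a / (2 * c)) + m * (1 / k - 1) * c)
      = (a / (2 * b) - c * m / b) * (a + c - b * (a / (2 * b) - c * m / b))"
    by simp
  then show "((\<lambda>t. c / b * (c1 + (\<epsilon> * c + a / 2 * (1 + a / (2 * c)) + m * (1 / k - 1) * c) * t))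
      has_real_derivative (a / (2 * b) - c * m / b) * (a + c - b * (a / (2 * b) - c * m / b))) (at t)"
    using assms(1) by (auto intro!: derivative_eq_intros simp: mult_ac)
qed auto

lemma quadratic_root_sqrt_discriminant:
  fixes k \<delta> \<epsilon> :: real
  assumes "k \<noteq> 0" "\<delta>^2 = 1" "0 \<le> 1 - 4 * \<epsilon> * k^2"
  defines "m \<equiv> 1 / (2 * k) * (\<delta> * sqrt (1 - 4 * \<epsilon> * k^2) - 1)"
  shows "m^2 + m / k + \<epsilon> = 0"
proof -
  have "m^2 + m / k + \<epsilon> = (\<delta>^2 * sqrt (1 - 4 * \<epsilon> * k^2)^2 - 1 + 4 * \<epsilon> * k^2) / (4 * k^2)"
    using assms(1) unfolding m_def by (simp add: field_simps power2_eq_square)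
  also have "\<dots> = 0"
    using assms(2,3) by simp
  finally show ?thesis .
qed

theorem mainTheorem6:
  fixes a b c c1 c2 \<epsilon> \<delta> k :: real
  assumes "a > 0" and "b > 0" and "c > 0"
    and "\<epsilon> \<in> {1, -1}" and "\<delta> \<in> {1, -1}"
  shows
   "solves_eq a b c (\<lambda>t x. c1 * exp (c * t) + a / (2 * b) * x * (c2 + (a + 2 * c) / 2 * t - ln x))
  \<and> solves_eq a b c (\<lambda>t x. (c1 - c * t) * exp (c * t) + 4 * \<delta> * exp (c / 2 * t) * sqrt (c * x / b)
        + a / (2 * b) * x * (c2 + (a + 2 * c) / 2 * t - ln x))
  \<and> solves_eq a b c (\<lambda>t x. c1 * exp (c * t)
        + (a + 2 * \<epsilon> * c) / (2 * b) * x * (c2 + (a + 2 * (1 - \<epsilon>) * c) / 2 * t - ln x))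
  \<and> solves_eq a b c (\<lambda>t x. \<epsilon> * c1^2 * exp ((1 - \<epsilon>) * c * t)
        + 4 * \<delta> * c1 * exp (c / 2 * (1 - \<epsilon>) * t) * sqrt (c * x / b)
        + (a + 2 * \<epsilon> * c) / (2 * b) * x * (c2 + (a + 2 * (1 - \<epsilon>) * c) / 2 * t - ln x))
  \<and> ((\<epsilon> = -1 \<and> k \<noteq> 0) \<or> (\<epsilon> = 1 \<and> 0 < \<bar>k\<bar> \<and> \<bar>k\<bar> \<le> 1/2) \<longrightarrow>
      solves_eq a b c (\<lambda>t x. c * x / b *
        (c1 + (\<epsilon> * c + a / 2 * (1 + a / (2 * c))) * t - a / (2 * c) * ln x
         + 1 / (2 * k) * (\<delta> * sqrt (1 - 4 * \<epsilon> * k^2) - 1) * ((1 / k - 1) * c * t + ln x))))"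
proof -
  have b: "b \<noteq> 0" "0 < b" and c: "c \<noteq> 0" "0 \<le> c"
    using assms(2,3) by auto
  have sq: "\<epsilon>^2 = 1" "\<delta>^2 = 1"
    using assms(4,5) by auto
  have k: "k \<noteq> 0 \<and> 0 \<le> 1 - 4 * \<epsilon> * k^2"
    if "(\<epsilon> = -1 \<and> k \<noteq> 0) \<or> (\<epsilon> = 1 \<and> 0 < \<bar>k\<bar> \<and> \<bar>k\<bar> \<le> 1/2)"
    using that
  proof (elim disjE conjE)
    assume "\<epsilon> = 1" "0 < \<bar>k\<bar>" "\<bar>k\<bar> \<le> 1/2"
    then show ?thesis
      using abs_le_square_iff[of k "1/2"] by (simp add: power_divide)
  qed simp
  have "solves_eq a b c (\<lambda>t x. c1 * exp (c * t) + a / (2 * b) * x * (c2 + (a + 2 * c) / 2 * t - ln x))"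
    using solves_eq_exp_log[OF b(1), where e = 0] by simp
  then show ?thesis
    using solves_eq_exp_log[OF b(1)] solves_eq_resonant[OF b(2) c(2) sq(2)]
      solves_eq_exp_sqrt_log[OF b(2) c(2) sq]
      solves_eq_log_linear[OF b(1) c(1) _ quadratic_root_sqrt_discriminant[OF _ sq(2)]] k
    by blast
qed

end
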